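(* Let $M$ be a smooth manifold, $(\mathbf{J}_1,\mathbf{J}_2)$ a generalized Kähler structure with associated bihermitian data $(g,b,I,J)$, and $K\in\Lambda^2T^*M$ a real 2-form. Then $[\Phi_K(\mathbf{J}_1),\mathbf{J}_2]=[\Phi_K(\mathbf{J}_2),\mathbf{J}_1]$ if and only if $K\in\Lambda^{1,1}_J$ (equivalently $KJ=-J^*K$ as maps $T\to T^*$).
   Context: A generalized Kähler structure is a pair of commuting integrable generalized complex structures $(\mathbf{J}_1,\mathbf{J}_2)$ on $T\oplus T^*$ (w.r.t. an $H$-twisted Courant bracket) such that $\langle -\mathbf{J}_1\mathbf{J}_2\cdot,\cdot\rangle$ is positive definite, $\langle X+\xi,Y+\eta\rangle=\tfrac12(\xi(Y)+\eta(X))$. It corresponds to bihermitian data $(g,b,I,J)$ via the Gualtieri map $\mathbf{J}_{1/2}=\tfrac12 e^b\begin{pmatrix} I\pm J & -(\omega_I^{-1}\mp\omega_J^{-1})\\ \omega_I\mp\omega_J & -(I^*\pm J^* )\end{pmatrix}e^{-b}$, with $\omega_I=gI$, $\omega_J=gJ$ as maps $T\to T^*$. For a 2-form $K$, $e^K(X+\xi)=X+\xi+K(X,\cdot)$ and $\Phi_K(\mathbf{J})=[\mathbf{J},e^K\mathbf{J}]$. $\Lambda^{1,1}_J$ is the space of real 2-forms with $K(JX,JY)=K(X,Y)$. *)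

theory Defs
  imports "HOL-Analysis.Analysis"
begin

text \<open>Pointwise (fibrewise) linear algebra at a point of M.
  T = real^'n, T* = real^'n (covectors, pairing xi(Y) = xi \<bullet> Y).
  Sections of T + T* at a point are pairs (X, xi).\<close>

type_synonym ('n) gvec = "(real^'n) \<times> (real^'n)"

definition bform :: "real^'n::finite^'n \<Rightarrow> real^'n \<Rightarrow> real^'n \<Rightarrow> real" where
  "bform B X Y = X \<bullet> (B *v Y)"

text \<open>flat B : T -> T*, X |-> B(X,.)\<close>
definition flat :: "real^'n::finite^'n \<Rightarrow> real^'n \<Rightarrow> real^'n" where
  "flat B X = transpose B *v X"

text \<open>dual map A^* : T* -> T*, xi |-> xi o A\<close>
definition dualmap :: "real^'n::finite^'n \<Rightarrow> real^'n \<Rightarrow> real^'n" where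
  "dualmap A xi = transpose A *v xi"

definition bexp :: "real^'n::finite^'n \<Rightarrow> ('n::finite) gvec \<Rightarrow> ('n::finite) gvec" where
  "bexp B v = (fst v, snd v + flat B (fst v))"

text \<open>omega_I = g I as a map T -> T*, as a matrix: X |-> g(IX,.)\<close>
definition omega :: "real^'n::finite^'n \<Rightarrow> real^'n^'n \<Rightarrow> real^'n^'n" where
  "omega g I = transpose g ** I"

text \<open>Gualtieri map (the upper sign gives J_1, the lower sign J_2).\<close>
definition gualt1 :: "real^'n::finite^'n \<Rightarrow> real^'n^'n \<Rightarrow> real^'n^'n \<Rightarrow> real^'n^'n \<Rightarrow> ('n::finite) gvec \<Rightarrow> ('n::finite) gvec" where
  "gualt1 g b I J = bexp b \<circ>
     (\<lambda>v. (1/2) *\<^sub>R ((I + J) *v fst v - (matrix_inv (omega g I) - matrix_inv (omega g J)) *v snd v,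
                     (omega g I - omega g J) *v fst v - (dualmap I (snd v) + dualmap J (snd v))))
     \<circ> bexp (- b)"

definition gualt2 :: "real^'n::finite^'n \<Rightarrow> real^'n^'n \<Rightarrow> real^'n^'n \<Rightarrow> real^'n^'n \<Rightarrow> ('n::finite) gvec \<Rightarrow> ('n::finite) gvec" where
  "gualt2 g b I J = bexp b \<circ>
     (\<lambda>v. (1/2) *\<^sub>R ((I - J) *v fst v - (matrix_inv (omega g I) + matrix_inv (omega g J)) *v snd v,
                     (omega g I + omega g J) *v fst v - (dualmap I (snd v) - dualmap J (snd v))))
     \<circ> bexp (- b)"

definition comm :: "(('n::finite) gvec \<Rightarrow> ('n::finite) gvec) \<Rightarrow> (('n::finite) gvec \<Rightarrow> ('n::finite) gvec) \<Rightarrow> ('n::finite) gvec \<Rightarrow> ('n::finite) gvec" where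
  "comm A B = (\<lambda>v. A (B v) - B (A v))"

definition PhiK :: "real^'n::finite^'n \<Rightarrow> (('n::finite) gvec \<Rightarrow> ('n::finite) gvec) \<Rightarrow> ('n::finite) gvec \<Rightarrow> ('n::finite) gvec" where
  "PhiK K A = comm A (bexp K \<circ> A)"

definition two_form :: "real^'n::finite^'n \<Rightarrow> bool" where
  "two_form K \<longleftrightarrow> transpose K = - K"

definition Lambda11 :: "real^'n::finite^'n \<Rightarrow> (real^'n^'n) set" where
  "Lambda11 J = {K. two_form K \<and> (\<forall>X Y. bform K (J *v X) (J *v Y) = bform K X Y)}"

definition bihermitian :: "real^'n::finite^'n \<Rightarrow> real^'n^'n \<Rightarrow> real^'n^'n \<Rightarrow> real^'n^'n \<Rightarrow> bool" where
  "bihermitian g b I J \<longleftrightarrow>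
     transpose g = g \<and> (\<forall>X. X \<noteq> 0 \<longrightarrow> bform g X X > 0) \<and> two_form b \<and>
     I ** I = - mat 1 \<and> J ** J = - mat 1 \<and>
     (\<forall>X Y. bform g (I *v X) (I *v Y) = bform g X Y) \<and>
     (\<forall>X Y. bform g (J *v X) (J *v Y) = bform g X Y)"

end

theory Submission
  imports Defs
begin

text \<open>The generalized metric \<open>-J\<^sub>1J\<^sub>2\<close> splits \<open>T \<oplus> T*\<close> into its eigenbundles
  \<open>C\<^sub>\<plusminus> = e\<^sup>b{X \<plusminus> gX}\<close>. On \<open>C\<^sub>+\<close> both \<open>J\<^sub>1\<close> and \<open>J\<^sub>2\<close> act as \<open>I\<close>, on \<open>C\<^sub>-\<close> they act as
  \<open>J\<close> and \<open>-J\<close>, while \<open>e\<^sup>K\<close> mixes the two summands through \<open>M = g\<^sup>-\<^sup>1K\<^sup>T\<close>. In these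
  coordinates \<open>[\<Phi>\<^sub>K(J\<^sub>1),J\<^sub>2] - [\<Phi>\<^sub>K(J\<^sub>2),J\<^sub>1]\<close> sends the point with components \<open>(u, w)\<close>
  to the point \<open>(0, 2(MJ - JM)w)\<close>, so the two commutators agree iff \<open>M\<close> commutes with \<open>J\<close>.
  Since \<open>J\<close> is \<open>g\<close>-skew, this says \<open>K\<^sup>TJ = -J\<^sup>TK\<^sup>T\<close>, which for a 2-form is the
  \<open>(1,1)\<close> condition.\<close>

declare transpose_matrix_vector [simp del]

lemma matrix_vector_mult_uminus_right [simp]: "(A::real^'n::finite^'m::finite) *v (- x) = - (A *v x)"
  by (simp add: vec_eq_iff matrix_vector_mult_def sum_negf)

lemma matrix_vector_mult_uminus_left [simp]: "(- A::real^'n::finite^'m::finite) *v x = - (A *v x)"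
  by (simp add: vec_eq_iff matrix_vector_mult_def sum_negf)

lemma matrix_mul_uminus_left [simp]: "(- A::real^'n::finite^'m::finite) ** B = - (A ** B)"
  by (simp add: matrix_eq matrix_vector_mul_assoc[symmetric])

lemma matrix_mul_uminus_right [simp]: "(A::real^'n::finite^'m::finite) ** (- B) = - (A ** B)"
  by (simp add: matrix_eq matrix_vector_mul_assoc[symmetric])

lemma transpose_uminus [simp]: "transpose (- A::real^'n::finite^'m::finite) = - transpose A"
  by (simp add: vec_eq_iff transpose_def)

lemma inner_matrix_vector_transpose:
  "inner ((A::real^'n::finite^'m::finite) *v x) y = inner x (transpose A *v y)"
  by (metis dot_lmul_matrix inner_commute transpose_matrix_vector)

lemma bform_eq_iff: "(\<forall>X Y. bform A X Y = bform B X Y) \<longleftrightarrow> A = B"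
  unfolding bform_def
  by (metis matrix_eq inner_eq_zero_iff eq_iff_diff_eq_0 inner_diff_right)

lemma bform_matrix_vector_mult:
  "bform B (A *v X) (A *v Y) = bform (transpose A ** B ** A) X Y"
  by (simp add: bform_def inner_matrix_vector_transpose matrix_vector_mul_assoc matrix_mul_assoc)

lemma matrix_inv_unique:
  fixes A B :: "real^'n::finite^'n"
  assumes "A ** B = mat 1" "B ** A = mat 1"
  shows "matrix_inv A = B"
proof -
  have inv: "A ** matrix_inv A = mat 1 \<and> matrix_inv A ** A = mat 1"
    unfolding matrix_inv_def by (rule someI[of _ B]) (use assms in blast)
  have "matrix_inv A = matrix_inv A ** (A ** B)" using assms by simp
  also have "\<dots> = B" using inv by (simp add: matrix_mul_assoc)
  finally show ?thesis .
qed

lemma matrix_inv_invertible: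
  fixes A :: "real^'n::finite^'n"
  assumes "invertible A"
  shows "A ** matrix_inv A = mat 1" and "matrix_inv A ** A = mat 1"
  using someI_ex[OF assms[unfolded invertible_def]] unfolding matrix_inv_def by auto

lemma positive_definite_invertible:
  fixes g :: "real^'n::finite^'n"
  assumes "\<And>X. X \<noteq> 0 \<Longrightarrow> bform g X X > 0"
  shows "invertible g"
proof -
  have "g *v X = 0 \<Longrightarrow> X = 0" for X
    using assms[of X] by (auto simp: bform_def)
  then show ?thesis
    unfolding invertible_left_inverse matrix_left_invertible_ker by blast
qed

lemma transpose_mult_metric_of_orthogonal:
  fixes g I :: "real^'n::finite^'n"
  assumes "\<And>X Y. bform g (I *v X) (I *v Y) = bform g X Y" and "I ** I = - mat 1"
  shows "transpose I ** g = - (g ** I)"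
proof -
  have "transpose I ** g ** I = g"
    using assms(1) bform_eq_iff by (metis bform_matrix_vector_mult)
  then have "transpose I ** g ** (I ** I) = g ** I" by (simp add: matrix_mul_assoc)
  then have "- (transpose I ** g) = g ** I" using assms(2) by simp
  then show ?thesis by (metis minus_minus)
qed

lemma matrix_inv_omega:
  fixes g h I :: "real^'n::finite^'n"
  assumes "transpose g = g" "g ** h = mat 1" "h ** g = mat 1" "I ** I = - mat 1"
  shows "matrix_inv (omega g I) = - (I ** h)"
proof (rule matrix_inv_unique)
  have "omega g I ** - (I ** h) = - (g ** ((I ** I) ** h))"
    using assms(1) by (simp add: omega_def matrix_mul_assoc)
  then show "omega g I ** - (I ** h) = mat 1"
    using assms(2,4) by simp
  show "- (I ** h) ** omega g I = mat 1"
    using assms by (simp add: omega_def matrix_mul_assoc[symmetric]) (simp add: matrix_mul_assoc)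
qed

lemma Lambda11_iff:
  fixes J K :: "real^'n::finite^'n"
  assumes "J ** J = - mat 1"
  shows "K \<in> Lambda11 J \<longleftrightarrow> two_form K \<and> K ** J = - (transpose J ** K)"
proof -
  have JJ: "transpose J ** transpose J = - mat 1"
    using assms by (metis matrix_transpose_mul transpose_mat transpose_uminus)
  have "K \<in> Lambda11 J \<longleftrightarrow> two_form K \<and> transpose J ** K ** J = K"
    unfolding Lambda11_def by (simp add: bform_matrix_vector_mult bform_eq_iff)
  also have "transpose J ** K ** J = K \<longleftrightarrow> K ** J = - (transpose J ** K)"
  proof
    assume "transpose J ** K ** J = K"
    then have "transpose J ** K ** (J ** J) = K ** J" by (metis matrix_mul_assoc)
    then show "K ** J = - (transpose J ** K)" using assms by simp
  next
    assume "K ** J = - (transpose J ** K)"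
    then have "transpose J ** K ** J = - (transpose J ** transpose J ** K)"
      by (metis matrix_mul_assoc matrix_mul_uminus_right)
    then show "transpose J ** K ** J = K" using JJ by simp
  qed
  finally show ?thesis .
qed

lemma flat_comp_eq_iff:
  "flat K \<circ> (\<lambda>X. J *v X) = (\<lambda>X. - dualmap J (flat K X))
     \<longleftrightarrow> transpose K ** J = - (transpose J ** transpose K)"
  by (simp add: fun_eq_iff flat_def dualmap_def matrix_eq matrix_vector_mul_assoc)

text \<open>The point \<open>e\<^sup>b((u + gu)/2 + (w - gw)/2)\<close> with \<open>C\<^sub>+\<close>-component \<open>u\<close> and \<open>C\<^sub>-\<close>-component \<open>w\<close>.\<close>

definition eigen_sum :: "real^'n::finite^'n \<Rightarrow> real^'n^'n \<Rightarrow> real^'n \<Rightarrow> real^'n \<Rightarrow> 'n gvec" where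
  "eigen_sum g b u w = bexp b ((1/2) *\<^sub>R (u + w), (1/2) *\<^sub>R (g *v (u - w)))"

lemma eigen_sum_diff:
  "eigen_sum g b u w - eigen_sum g b u' w' = eigen_sum g b (u - u') (w - w')"
  by (simp add: eigen_sum_def bexp_def flat_def algebra_simps)

lemma eigen_sum_zero_eq_0_iff:
  assumes "invertible g"
  shows "eigen_sum g b 0 w = 0 \<longleftrightarrow> w = 0"
  using inj_matrix_vector_mult[OF assms]
  by (auto simp: eigen_sum_def bexp_def flat_def zero_prod_def inj_eq[where f = "(*v) g"])

lemma eigen_sum_surj:
  assumes "g ** h = mat 1"
  shows "\<exists>u w. v = eigen_sum g b u w"
proof -
  obtain X \<xi> where v: "v = (X, \<xi>)" by fastforce
  define Y where "Y = h *v (\<xi> - transpose b *v X)"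
  have "g *v Y = \<xi> - transpose b *v X"
    using assms by (simp add: Y_def matrix_vector_mul_assoc)
  moreover have "(1/2) *\<^sub>R ((X + Y) + (X - Y)) = X" "(1/2) *\<^sub>R ((X + Y) - (X - Y)) = Y"
    by (simp_all add: vec_eq_iff)
  ultimately have "eigen_sum g b (X + Y) (X - Y) = v"
    by (simp add: eigen_sum_def bexp_def flat_def v matrix_vector_mult_scaleR[symmetric])
  then show ?thesis by metis
qed

lemma bexp_eigen_sum:
  assumes "g ** h = mat 1"
  shows "bexp K (eigen_sum g b u w) = eigen_sum g b (u + (1/2) *\<^sub>R ((h ** transpose K) *v (u + w)))
            (w - (1/2) *\<^sub>R ((h ** transpose K) *v (u + w)))"
proof -
  have "g *v (h *v x) = x" for x
    using assms by (simp add: matrix_vector_mul_assoc)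
  then show ?thesis
    by (simp add: eigen_sum_def bexp_def flat_def algebra_simps matrix_vector_mul_assoc[symmetric])
qed

lemma PhiK_commutator_diff_eigen_sum:
  fixes I J M :: "real^'n::finite^'n" and A\<^sub>1 A\<^sub>2 E :: "'n gvec \<Rightarrow> 'n gvec"
  assumes "I ** I = - mat 1" and "J ** J = - mat 1"
    and A\<^sub>1: "\<And>u w. A\<^sub>1 (eigen_sum g b u w) = eigen_sum g b (I *v u) (J *v w)"
    and A\<^sub>2: "\<And>u w. A\<^sub>2 (eigen_sum g b u w) = eigen_sum g b (I *v u) (- (J *v w))"
    and E: "\<And>u w. E (eigen_sum g b u w) =
      eigen_sum g b (u + (1/2) *\<^sub>R (M *v (u + w))) (w - (1/2) *\<^sub>R (M *v (u + w)))"
  shows "comm (comm A\<^sub>1 (E \<circ> A\<^sub>1)) A\<^sub>2 (eigen_sum g b u w) - comm (comm A\<^sub>2 (E \<circ> A\<^sub>2)) A\<^sub>1 (eigen_sum g b u w)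
       = eigen_sum g b 0 (2 *\<^sub>R (M *v (J *v w) - J *v (M *v w)))"
proof -
  have "I *v (I *v x) = - x" "J *v (J *v x) = - x" for x
    using assms(1,2) by (simp_all add: matrix_vector_mul_assoc)
  then show ?thesis
    unfolding comm_def o_def
    by (simp add: A\<^sub>1 A\<^sub>2 E eigen_sum_diff)
      (intro arg_cong2[where f = "eigen_sum g b"];
        simp add: algebra_simps; simp add: vec_eq_iff field_simps)
qed

lemma matrix_inv_mult_commute_iff:
  fixes g J A :: "real^'n::finite^'n"
  assumes "invertible g" and "transpose J ** g = - (g ** J)"
  shows "matrix_inv g ** A ** J = J ** (matrix_inv g ** A) \<longleftrightarrow> A ** J = - (transpose J ** A)"
proof -
  note inv = matrix_inv_invertible[OF assms(1)]
  have cancel: "X = Y \<longleftrightarrow> g ** X = g ** Y" for X Y :: "real^'n^'n"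
    by (metis inv(2) matrix_mul_assoc matrix_mul_lid)
  have "g ** (matrix_inv g ** A ** J) = (g ** matrix_inv g) ** A ** J"
    by (simp add: matrix_mul_assoc)
  also have "\<dots> = A ** J" using inv(1) by simp
  finally have left: "g ** (matrix_inv g ** A ** J) = A ** J" .
  have "g ** (J ** (matrix_inv g ** A)) = - (transpose J ** g) ** matrix_inv g ** A"
    using assms(2) by (simp add: matrix_mul_assoc)
  also have "\<dots> = - (transpose J ** (g ** matrix_inv g) ** A)"
    by (simp add: matrix_mul_assoc)
  also have "\<dots> = - (transpose J ** A)" using inv(1) by simp
  finally have right: "g ** (J ** (matrix_inv g ** A)) = - (transpose J ** A)" .
  show ?thesis by (subst cancel) (simp only: left right)
qed

locale bihermitian_structure =
  fixes g b I J :: "real^'n::finite^'n"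
  assumes bihermitian: "bihermitian g b I J"
begin

lemma metric_symmetric: "transpose g = g"
  using bihermitian by (simp add: bihermitian_def)

lemma metric_invertible: "invertible g"
  using bihermitian by (intro positive_definite_invertible) (simp add: bihermitian_def)

lemma I_squared: "I ** I = - mat 1" and J_squared: "J ** J = - mat 1"
  using bihermitian by (simp_all add: bihermitian_def)

lemma transpose_I_metric: "transpose I ** g = - (g ** I)"
  using bihermitian I_squared by (intro transpose_mult_metric_of_orthogonal) (auto simp: bihermitian_def)

lemma transpose_J_metric: "transpose J ** g = - (g ** J)"
  using bihermitian J_squared by (intro transpose_mult_metric_of_orthogonal) (auto simp: bihermitian_def)

lemma gualt_eigen_sum:
  shows "gualt1 g b I J (eigen_sum g b u w) = eigen_sum g b (I *v u) (J *v w)"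
    and "gualt2 g b I J (eigen_sum g b u w) = eigen_sum g b (I *v u) (- (J *v w))"
proof -
  note ginv = matrix_inv_invertible[OF metric_invertible]
  have omega: "omega g A *v x = g *v (A *v x)" for A x
    using metric_symmetric by (simp add: omega_def matrix_vector_mul_assoc)
  have skew: "transpose A *v (g *v y) = - (g *v (A *v y))"
    if "transpose A ** g = - (g ** A)" for A y
    using that by (simp add: matrix_vector_mul_assoc)
  have omega_inv: "matrix_inv (omega g A) *v (g *v y) = - (A *v y)"
    if "A ** A = - mat 1" for A y
    using matrix_inv_omega[OF metric_symmetric ginv that] ginv(2)
    by (simp add: matrix_vector_mul_assoc) (metis matrix_mul_assoc matrix_mul_rid)
  note simps = omega skew[OF transpose_I_metric] skew[OF transpose_J_metric]
    omega_inv[OF I_squared] omega_inv[OF J_squared]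
  note linear = matrix_vector_right_distrib matrix_vector_mult_diff_distrib matrix_vector_mult_scaleR
    matrix_vector_mult_add_rdistrib matrix_vector_mult_diff_rdistrib
    scaleR_right_distrib scaleR_right_diff_distrib
  show "gualt1 g b I J (eigen_sum g b u w) = eigen_sum g b (I *v u) (J *v w)"
    unfolding gualt1_def eigen_sum_def
    by (simp add: bexp_def flat_def dualmap_def linear simps)
  show "gualt2 g b I J (eigen_sum g b u w) = eigen_sum g b (I *v u) (- (J *v w))"
    unfolding gualt2_def eigen_sum_def
    by (simp add: bexp_def flat_def dualmap_def linear simps)
qed

lemma PhiK_commutators_eq_iff:
  "comm (PhiK K (gualt1 g b I J)) (gualt2 g b I J) = comm (PhiK K (gualt2 g b I J)) (gualt1 g b I J)
     \<longleftrightarrow> transpose K ** J = - (transpose J ** transpose K)"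
    (is "?L = ?R \<longleftrightarrow> _")
proof -
  define M where "M = matrix_inv g ** transpose K"
  note ginv = matrix_inv_invertible[OF metric_invertible]
  have diff: "?L (eigen_sum g b u w) - ?R (eigen_sum g b u w)
      = eigen_sum g b 0 (2 *\<^sub>R (M *v (J *v w) - J *v (M *v w)))" for u w
    unfolding PhiK_def M_def
    by (rule PhiK_commutator_diff_eigen_sum[OF I_squared J_squared gualt_eigen_sum
          bexp_eigen_sum[OF ginv(1)]])
  have "?L = ?R \<longleftrightarrow> (\<forall>w. M *v (J *v w) = J *v (M *v w))"
  proof
    assume "?L = ?R"
    then show "\<forall>w. M *v (J *v w) = J *v (M *v w)"
      using diff[of 0] eigen_sum_zero_eq_0_iff[OF metric_invertible] by simp
  next
    assume commute: "\<forall>w. M *v (J *v w) = J *v (M *v w)"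
    show "?L = ?R"
    proof
      fix v
      obtain u w where "v = eigen_sum g b u w"
        using eigen_sum_surj[OF ginv(1)] by blast
      then have "?L v - ?R v = eigen_sum g b 0 0"
        using diff commute by simp
      also have "\<dots> = 0"
        using eigen_sum_zero_eq_0_iff[OF metric_invertible] by simp
      finally show "?L v = ?R v" by simp
    qed
  qed
  also have "\<dots> \<longleftrightarrow> M ** J = J ** M"
    by (simp add: matrix_eq matrix_vector_mul_assoc)
  also have "\<dots> \<longleftrightarrow> transpose K ** J = - (transpose J ** transpose K)"
    unfolding M_def by (rule matrix_inv_mult_commute_iff[OF metric_invertible transpose_J_metric])
  finally show ?thesis .
qed

end

theorem proposition3p3:
  fixes g b I J K :: "real^'n^'n"
  assumes "bihermitian g b I J"
    and "two_form K"
  shows "(comm (PhiK K (gualt1 g b I J)) (gualt2 g b I J)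
             = comm (PhiK K (gualt2 g b I J)) (gualt1 g b I J)
           \<longleftrightarrow> K \<in> Lambda11 J)
       \<and> (K \<in> Lambda11 J \<longleftrightarrow> flat K \<circ> (\<lambda>X. J *v X) = (\<lambda>X. - dualmap J (flat K X)))"
proof -
  interpret bihermitian_structure g b I J
    using assms(1) by unfold_locales
  have "transpose K = - K"
    using assms(2) by (simp add: two_form_def)
  then have "K ** J = - (transpose J ** K) \<longleftrightarrow> transpose K ** J = - (transpose J ** transpose K)"
    by (metis matrix_mul_uminus_left matrix_mul_uminus_right minus_minus)
  then have "K \<in> Lambda11 J \<longleftrightarrow> transpose K ** J = - (transpose J ** transpose K)"
    using Lambda11_iff[OF J_squared] assms(2) by simp
  then show ?thesis
    using PhiK_commutators_eq_iff flat_comp_eq_iff by blast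
qed

end
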